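(* Let $k \ge 4$ be a fixed integer (independent of $n$). Then \[\mathrm{size}(\mathrm{THR}_n^k) \le \left(4.5-2^{\,2-\lceil \log_2 k\rceil}\right)n+o(n)\,,\] where $o(n)$ denotes a function of $n$ (which may depend on $k$) with $o(n)/n \to 0$ as $n\to\infty$.
   Context: A Boolean straight line program of size $s$ on input variables $x_1,\dots,x_n$ is a sequence of $s$ instructions, each of the form $g \gets h \circ k$ where $\circ$ is an arbitrary binary Boolean operation (any of the 16 functions $\{0,1\}^2\to\{0,1\}$) and each operand is either an input variable or the result of an earlier instruction; designated instructions are outputs, and the program computes a function in the natural way (equivalently, a Boolean circuit with fan-in-two gates over the full binary basis). For a Boolean function $f$, $\mathrm{size}(f)$ is the minimum size of a straight line program computing $f$. The threshold function $\mathrm{THR}_n^k\colon\{0,1\}^n\to\{0,1\}$ is defined by $\mathrm{THR}_n^k(x_1,\dots,x_n)=1$ if $x_1+\dots+x_n\ge k$ and $0$ otherwise. *)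

theory Defs
  imports Complex_Main "HOL-Library.Landau_Symbols"
begin

text \<open>An operand is either an input variable (index i < n) or the result of an earlier
  instruction (index j < position of the current instruction).\<close>

datatype operand = Inp nat | Gate nat

type_synonym instr = "(bool \<Rightarrow> bool \<Rightarrow> bool) \<times> operand \<times> operand"

fun wf_operand :: "nat \<Rightarrow> nat \<Rightarrow> operand \<Rightarrow> bool" where
  "wf_operand n m (Inp i) = (i < n)"
| "wf_operand n m (Gate j) = (j < m)"

definition wf_prog :: "nat \<Rightarrow> instr list \<Rightarrow> bool" where
  "wf_prog n P = (\<forall>j < length P. wf_operand n j (fst (snd (P ! j))) \<and> wf_operand n j (snd (snd (P ! j))))"

fun opval :: "bool list \<Rightarrow> bool list \<Rightarrow> operand \<Rightarrow> bool" where
  "opval xs gs (Inp i) = xs ! i"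
| "opval xs gs (Gate j) = gs ! j"

fun run :: "instr list \<Rightarrow> bool list \<Rightarrow> bool list \<Rightarrow> bool list" where
  "run [] xs gs = gs"
| "run ((f, a, b) # P) xs gs = run P xs (gs @ [f (opval xs gs a) (opval xs gs b)])"

definition computes :: "nat \<Rightarrow> instr list \<Rightarrow> nat \<Rightarrow> (bool list \<Rightarrow> bool) \<Rightarrow> bool" where
  "computes n P j f = (wf_prog n P \<and> j < length P \<and>
      (\<forall>xs. length xs = n \<longrightarrow> run P xs [] ! j = f xs))"

definition slp_size :: "nat \<Rightarrow> (bool list \<Rightarrow> bool) \<Rightarrow> nat" where
  "slp_size n f = (LEAST s. \<exists>P j. length P = s \<and> computes n P j f)"

definition THR :: "nat \<Rightarrow> nat \<Rightarrow> bool list \<Rightarrow> bool" where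
  "THR n k xs = (k \<le> length (filter id xs))"

end

theory Submission
  imports Defs "HOL-Real_Asymp.Real_Asymp"
begin

text \<open>
  Write the sum of two inputs \<open>x + y\<close> as the pair \<open>(x, x \<oplus> y)\<close>, at a cost of \<open>n/2\<close> gates.
  A modified full adder (MDFA) of 8 gates adds two such pairs and a carry bit and returns a sum
  bit and a pair of weight 2, so a chain of MDFAs over \<open>m\<close> pairs costs \<open>4m\<close> gates, produces
  one binary digit of the number of ones and halves the number of pairs.  After
  \<open>L = \<lceil>log 2 k\<rceil> - 1\<close> halvings, the last one by a variant that returns plain bits, the number
  of ones is \<open>\<Sum>i<L. 2^i b_i + 2^L T\<close>, where \<open>T\<close> counts the ones among about \<open>n / 2^L\<close>
  plain bits; so far the cost is \<open>n/2 + 4n (1 - 2^-L) + O(1)\<close>.  As \<open>k \<le> 2^(L+1)\<close>, the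
  threshold only depends on the bits \<open>b_i\<close> and on whether \<open>T\<close> is 0, 1 or at least 2.  Placing
  the plain bits in a grid of width about \<open>sqrt n\<close>, at least two of them are set iff two rows
  or two columns contain a set bit, which row and column prefix ORs decide with 2 gates per bit
  and \<open>O(sqrt n)\<close> further gates.  A final circuit whose size depends only on \<open>k\<close> combines
  these values, for a total of \<open>(4.5 - 2^(1-L)) n + O(sqrt n)\<close> gates.
\<close>

section \<open>Blocks of instructions\<close>

definition all_at :: "(nat \<Rightarrow> 'a \<Rightarrow> bool) \<Rightarrow> nat \<Rightarrow> 'a list \<Rightarrow> bool" where
  "all_at Q m B \<longleftrightarrow> (\<forall>r<length B. Q (m + r) (B ! r))"

lemma all_at_Nil [simp]: "all_at Q m []"
  by (simp add: all_at_def)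

lemma all_at_Cons [simp]: "all_at Q m (x # B) \<longleftrightarrow> Q m x \<and> all_at Q (Suc m) B"
  by (auto simp: all_at_def nth_Cons' less_Suc_eq_0_disj)

lemma all_at_append: "all_at Q m (A @ B) \<longleftrightarrow> all_at Q m A \<and> all_at Q (m + length A) B"
  by (induction A arbitrary: m) simp_all

lemma all_at_map_upt: "all_at Q m (map f [0..<K]) \<longleftrightarrow> (\<forall>i<K. Q (m + i) (f i))"
  by (simp add: all_at_def)

lemma length_concat_uniform:
  "(\<And>i. i < K \<Longrightarrow> length (g i) = c) \<Longrightarrow> length (concat (map g [0..<K])) = c * K"
  by (induction K) auto

lemma all_at_concat_uniform:
  assumes "\<And>i. i < K \<Longrightarrow> length (g i) = c"
  shows "all_at Q m (concat (map g [0..<K])) \<longleftrightarrow> (\<forall>i<K. all_at Q (m + c * i) (g i))"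
  using assms by (induction K) (auto simp: all_at_append length_concat_uniform less_Suc_eq)

definition wf_instr :: "nat \<Rightarrow> nat \<Rightarrow> instr \<Rightarrow> bool" where
  "wf_instr n j ins \<longleftrightarrow> wf_operand n j (fst (snd ins)) \<and> wf_operand n j (snd (snd ins))"

definition evaluates :: "bool list \<Rightarrow> bool list \<Rightarrow> nat \<Rightarrow> instr \<Rightarrow> bool" where
  "evaluates xs G j ins \<longleftrightarrow> G ! j = fst ins (opval xs G (fst (snd ins))) (opval xs G (snd (snd ins)))"

lemma evaluates_instr [simp]:
  "evaluates xs G j (f, a, b) \<longleftrightarrow> G ! j = f (opval xs G a) (opval xs G b)"
  by (simp add: evaluates_def)

lemma wf_instr_instr [simp]: "wf_instr n j (f, a, b) \<longleftrightarrow> wf_operand n j a \<and> wf_operand n j b"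
  by (simp add: wf_instr_def)

lemma wf_operand_mono: "wf_operand n m a \<Longrightarrow> m \<le> m' \<Longrightarrow> wf_operand n m' a"
  by (cases a) auto

lemma wf_prog_iff_all_at: "wf_prog n P \<longleftrightarrow> all_at (wf_instr n) 0 P"
  by (simp add: wf_prog_def all_at_def wf_instr_def)

lemma run_extends: "\<exists>r. run P xs gs = gs @ r"
proof (induction P arbitrary: gs)
  case (Cons ins P)
  obtain f a b where "ins = (f, a, b)" by (cases ins)
  then show ?case using Cons.IH[of "gs @ [f (opval xs gs a) (opval xs gs b)]"] by auto
qed simp

lemma opval_append: "wf_operand n (length gs) a \<Longrightarrow> opval xs (gs @ r) a = opval xs gs a"
  by (cases a) (auto simp: nth_append)

lemma run_evaluates_from:
  "all_at (wf_instr n) (length gs) P \<Longrightarrow> all_at (evaluates xs (run P xs gs)) (length gs) P"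
proof (induction P arbitrary: gs)
  case (Cons ins P)
  obtain f a b where ins: "ins = (f, a, b)" by (cases ins)
  define g where "g = f (opval xs gs a) (opval xs gs b)"
  obtain r where r: "run P xs (gs @ [g]) = gs @ g # r"
    using run_extends[of P xs "gs @ [g]"] by auto
  have "opval xs (gs @ g # r) a = opval xs gs a" "opval xs (gs @ g # r) b = opval xs gs b"
    using Cons.prems opval_append[of n gs _ xs "g # r"] by (simp_all add: ins wf_instr_def)
  then have "evaluates xs (run (ins # P) xs gs) (length gs) ins"
    by (simp add: ins r g_def[symmetric])
  moreover have "all_at (evaluates xs (run (ins # P) xs gs)) (Suc (length gs)) P"
    using Cons.IH[of "gs @ [g]"] Cons.prems by (simp add: ins g_def)
  ultimately show ?case by simp
qed simp

lemma run_evaluates: "wf_prog n P \<Longrightarrow> all_at (evaluates xs (run P xs [])) 0 P"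
  using run_evaluates_from[of n "[]" P xs] by (simp add: wf_prog_iff_all_at)

section \<open>Adding encoded pairs\<close>

text \<open>A pair of operands with values \<open>(x, x \<oplus> y)\<close> encodes \<open>x + y\<close>.\<close>

definition pair_value :: "bool list \<Rightarrow> bool list \<Rightarrow> operand \<times> operand \<Rightarrow> nat" where
  "pair_value xs G p = (if opval xs G (snd p) then 1 else if opval xs G (fst p) then 2 else 0)"

definition wf_pair :: "nat \<Rightarrow> nat \<Rightarrow> operand \<times> operand \<Rightarrow> bool" where
  "wf_pair n m p \<longleftrightarrow> wf_operand n m (fst p) \<and> wf_operand n m (snd p)"

lemma wf_pair_mono: "wf_pair n m p \<Longrightarrow> m \<le> m' \<Longrightarrow> wf_pair n m' p"
  by (auto simp: wf_pair_def intro: wf_operand_mono)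

type_synonym adder = "nat \<Rightarrow> operand \<times> operand \<Rightarrow> operand \<times> operand \<Rightarrow> operand \<Rightarrow> instr list"

text \<open>The modified full adder; \<open>mdfa_bits\<close> returns its weight-2 output as two plain bits.\<close>

definition mdfa :: adder where
  "mdfa m p q x =
    [(\<lambda>u v. u \<noteq> v, fst p, x),
     (\<lambda>u v. u \<or> v, snd p, Gate m),
     (\<lambda>u v. u \<noteq> v, snd p, x),
     (\<lambda>u v. u = v, fst q, Gate (m + 2)),
     (\<lambda>u v. u \<or> v, snd q, Gate (m + 3)),
     (\<lambda>u v. u \<noteq> v, snd q, Gate (m + 2)),
     (\<lambda>u v. u = v, Gate (m + 2), Gate (m + 4)),
     (\<lambda>u v. u = v, Gate (m + 1), Gate (m + 4))]"

definition mdfa_bits :: adder where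
  "mdfa_bits m p q x =
    [(\<lambda>u v. u \<and> \<not> v, fst q, snd q),
     (\<lambda>u v. \<not> (u \<and> v), snd q, x),
     (\<lambda>u v. u \<noteq> v, snd p, snd q),
     (\<lambda>u v. u \<longrightarrow> v, fst p, snd p),
     (\<lambda>u v. u = v, Gate m, Gate (m + 1)),
     (\<lambda>u v. u \<noteq> v, x, Gate (m + 2)),
     (\<lambda>u v. u \<longrightarrow> v, snd p, Gate (m + 5)),
     (\<lambda>u v. u \<noteq> v, Gate (m + 3), Gate (m + 6))]"

lemma length_mdfa [simp]: "length (mdfa m p q x) = 8"
  by (simp add: mdfa_def)

lemma length_mdfa_bits [simp]: "length (mdfa_bits m p q x) = 8"
  by (simp add: mdfa_bits_def)

lemma mdfa_sum:
  assumes "all_at (evaluates xs G) m (mdfa m p q x)"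
  shows "pair_value xs G p + pair_value xs G q + of_bool (opval xs G x)
       = of_bool (G ! (m + 5)) + 2 * pair_value xs G (Gate (m + 6), Gate (m + 7))"
  using assms
  by (cases "opval xs G (fst p)"; cases "opval xs G (snd p)"; cases "opval xs G (fst q)";
      cases "opval xs G (snd q)"; cases "opval xs G x")
     (simp_all add: mdfa_def evaluates_def pair_value_def numeral_eq_Suc)

lemma mdfa_bits_sum:
  assumes "all_at (evaluates xs G) m (mdfa_bits m p q x)"
  shows "pair_value xs G p + pair_value xs G q + of_bool (opval xs G x)
       = of_bool (G ! (m + 5)) + 2 * (of_bool (G ! (m + 4)) + of_bool (G ! (m + 7)))"
  using assms
  by (cases "opval xs G (fst p)"; cases "opval xs G (snd p)"; cases "opval xs G (fst q)";
      cases "opval xs G (snd q)"; cases "opval xs G x")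
     (simp_all add: mdfa_bits_def evaluates_def pair_value_def numeral_eq_Suc)

lemma wf_mdfa:
  "wf_pair n m p \<Longrightarrow> wf_pair n m q \<Longrightarrow> wf_operand n m x \<Longrightarrow>
    all_at (wf_instr n) m (mdfa m p q x)"
  by (auto simp: mdfa_def wf_pair_def wf_instr_def intro: wf_operand_mono[of n m])

lemma wf_mdfa_bits:
  "wf_pair n m p \<Longrightarrow> wf_pair n m q \<Longrightarrow> wf_operand n m x \<Longrightarrow>
    all_at (wf_instr n) m (mdfa_bits m p q x)"
  by (auto simp: mdfa_bits_def wf_pair_def wf_instr_def intro: wf_operand_mono[of n m])

definition ceil_half :: "nat \<Rightarrow> nat" where
  "ceil_half K = Suc K div 2"

fun chain :: "adder \<Rightarrow> operand \<Rightarrow> nat \<Rightarrow> operand \<Rightarrow> (operand \<times> operand) list \<Rightarrow> instr list" where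
  "chain A z m x [] = []"
| "chain A z m x [p] = A m p (z, z) x"
| "chain A z m x (p # q # ps) = A m p q x @ chain A z (m + 8) (Gate (m + 5)) ps"

fun chain_carry :: "nat \<Rightarrow> operand \<Rightarrow> (operand \<times> operand) list \<Rightarrow> operand" where
  "chain_carry m x [] = x"
| "chain_carry m x [p] = Gate (m + 5)"
| "chain_carry m x (p # q # ps) = chain_carry (m + 8) (Gate (m + 5)) ps"

lemma ceil_half_simps [simp]:
  "ceil_half 0 = 0" "ceil_half (Suc 0) = 1" "ceil_half (Suc (Suc K)) = Suc (ceil_half K)"
  by (simp_all add: ceil_half_def)

lemma length_chain:
  assumes "\<And>m p q x. length (A m p q x) = 8"
  shows "length (chain A z m x ps) = 8 * ceil_half (length ps)"
  by (induction ps arbitrary: m x rule: induct_list012) (simp_all add: assms)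

lemma chain_sum:
  assumes adder_sum: "\<And>m p q x. all_at (evaluates xs G) m (A m p q x) \<Longrightarrow>
      pair_value xs G p + pair_value xs G q + of_bool (opval xs G x)
        = of_bool (G ! (m + 5)) + 2 * out m"
    and adder_length: "\<And>m p q x. length (A m p q x) = 8"
    and "all_at (evaluates xs G) m (chain A z m x ps)" and z: "\<not> opval xs G z"
  shows "sum_list (map (pair_value xs G) ps) + of_bool (opval xs G x)
       = of_bool (opval xs G (chain_carry m x ps))
         + 2 * (\<Sum>i<ceil_half (length ps). out (m + 8 * i))"
  using assms(3)
proof (induction ps arbitrary: m x rule: induct_list012)
  case (2 p)
  have "pair_value xs G (z, z) = 0" using z by (simp add: pair_value_def)
  then show ?case using adder_sum[of m p "(z, z)" x] "2.prems" by simp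
next
  case (3 p q ps)
  have "all_at (evaluates xs G) m (A m p q x)"
    and "all_at (evaluates xs G) (m + 8) (chain A z (m + 8) (Gate (m + 5)) ps)"
    using "3.prems" by (simp_all add: all_at_append adder_length)
  moreover have "(\<Sum>i<Suc K. out (m + 8 * i)) = out m + (\<Sum>i<K. out (m + 8 + 8 * i))" for K
    by (simp add: sum.lessThan_Suc_shift add.assoc del: sum.lessThan_Suc)
  ultimately show ?case
    using adder_sum[of m p q x] "3.IH"(1)[of "m + 8" "Gate (m + 5)"] by (simp add: algebra_simps)
qed simp

lemma wf_chain:
  assumes wf_adder: "\<And>m p q x. wf_pair n m p \<Longrightarrow> wf_pair n m q \<Longrightarrow> wf_operand n m x \<Longrightarrow>
      all_at (wf_instr n) m (A m p q x)"
    and adder_length: "\<And>m p q x. length (A m p q x) = 8"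
    and "\<forall>p\<in>set ps. wf_pair n m p" "wf_operand n m z" "wf_operand n m x"
  shows "all_at (wf_instr n) m (chain A z m x ps)"
  using assms(3-)
proof (induction ps arbitrary: m x rule: induct_list012)
  case (2 p)
  then show ?case by (simp add: wf_adder wf_pair_def)
next
  case (3 p q ps)
  have "all_at (wf_instr n) (m + 8) (chain A z (m + 8) (Gate (m + 5)) ps)"
    using "3.prems" by (intro "3.IH") (auto intro: wf_pair_mono wf_operand_mono)
  then show ?case using "3.prems" by (simp add: all_at_append adder_length wf_adder)
qed simp

lemma wf_chain_carry:
  "wf_operand n m x \<Longrightarrow> wf_operand n (m + 8 * ceil_half (length ps)) (chain_carry m x ps)"
  by (induction m x ps rule: chain_carry.induct) (simp_all add: wf_operand_mono add.assoc)

definition pair_outputs :: "nat \<Rightarrow> nat \<Rightarrow> (operand \<times> operand) list" where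
  "pair_outputs m K = map (\<lambda>i. (Gate (m + 8 * i + 6), Gate (m + 8 * i + 7))) [0..<K]"

definition bit_outputs :: "nat \<Rightarrow> nat \<Rightarrow> operand list" where
  "bit_outputs m K = concat (map (\<lambda>i. [Gate (m + 8 * i + 4), Gate (m + 8 * i + 7)]) [0..<K])"

lemma length_pair_outputs [simp]: "length (pair_outputs m K) = K"
  by (simp add: pair_outputs_def)

lemma length_bit_outputs [simp]: "length (bit_outputs m K) = 2 * K"
  by (induction K) (simp_all add: bit_outputs_def)

lemma mdfa_chain_sum:
  assumes "all_at (evaluates xs G) m (chain mdfa z m z ps)" "\<not> opval xs G z"
  shows "sum_list (map (pair_value xs G) ps) = of_bool (opval xs G (chain_carry m z ps))
      + 2 * sum_list (map (pair_value xs G) (pair_outputs m (ceil_half (length ps))))"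
  using chain_sum[OF mdfa_sum length_mdfa assms] assms(2)
  by (simp add: pair_outputs_def interv_sum_list_conv_sum_set_nat atLeast0LessThan algebra_simps)

lemma mdfa_bits_chain_sum:
  assumes "all_at (evaluates xs G) m (chain mdfa_bits z m z ps)" "\<not> opval xs G z"
  shows "sum_list (map (pair_value xs G) ps) = of_bool (opval xs G (chain_carry m z ps))
      + 2 * length (filter (opval xs G) (bit_outputs m (ceil_half (length ps))))"
proof -
  have "length (filter (opval xs G) (bit_outputs m K))
      = (\<Sum>i<K. of_bool (G ! (m + 8 * i + 4)) + of_bool (G ! (m + 8 * i + 7)))" for K
    by (induction K) (simp_all add: bit_outputs_def)
  then show ?thesis using chain_sum[OF mdfa_bits_sum length_mdfa_bits assms] assms(2)
    by (simp add: algebra_simps)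
qed

lemma wf_pair_outputs: "\<forall>p\<in>set (pair_outputs m K). wf_pair n (m + 8 * K) p"
  by (auto simp: pair_outputs_def wf_pair_def)

lemma wf_bit_outputs: "\<forall>y\<in>set (bit_outputs m K). wf_operand n (m + 8 * K) y"
  by (auto simp: bit_outputs_def)

fun level_code :: "nat \<Rightarrow> operand \<Rightarrow> nat \<Rightarrow> (operand \<times> operand) list \<Rightarrow> instr list" where
  "level_code 0 z m ps = []"
| "level_code (Suc j) z m ps = chain mdfa z m z ps
     @ level_code j z (m + 8 * ceil_half (length ps)) (pair_outputs m (ceil_half (length ps)))"

fun level_bits :: "nat \<Rightarrow> operand \<Rightarrow> nat \<Rightarrow> (operand \<times> operand) list \<Rightarrow> operand list" where
  "level_bits 0 z m ps = []"
| "level_bits (Suc j) z m ps = chain_carry m z ps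
     # level_bits j z (m + 8 * ceil_half (length ps)) (pair_outputs m (ceil_half (length ps)))"

fun level_pairs :: "nat \<Rightarrow> nat \<Rightarrow> (operand \<times> operand) list \<Rightarrow> (operand \<times> operand) list" where
  "level_pairs 0 m ps = ps"
| "level_pairs (Suc j) m ps =
     level_pairs j (m + 8 * ceil_half (length ps)) (pair_outputs m (ceil_half (length ps)))"

lemma length_level_bits [simp]: "length (level_bits j z m ps) = j"
  by (induction j arbitrary: m ps) simp_all

lemma length_level_pairs: "length (level_pairs j m ps) = (ceil_half ^^ j) (length ps)"
  by (induction j arbitrary: m ps) (simp_all add: funpow_swap1)

lemma length_level_code:
  "length (level_code j z m ps) = (\<Sum>i<j. 8 * (ceil_half ^^ Suc i) (length ps))"
  by (induction j arbitrary: m ps)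
    (simp_all add: length_chain sum.lessThan_Suc_shift funpow_Suc_right
      del: funpow.simps sum.lessThan_Suc)

lemma level_sum:
  assumes "all_at (evaluates xs G) m (level_code j z m ps)" "\<not> opval xs G z"
  shows "sum_list (map (pair_value xs G) ps)
      = horner_sum of_bool 2 (map (opval xs G) (level_bits j z m ps))
      + 2 ^ j * sum_list (map (pair_value xs G) (level_pairs j m ps))"
  using assms(1)
proof (induction j arbitrary: m ps)
  case (Suc j)
  define K where "K = ceil_half (length ps)"
  have "all_at (evaluates xs G) m (chain mdfa z m z ps)"
    and "all_at (evaluates xs G) (m + 8 * K) (level_code j z (m + 8 * K) (pair_outputs m K))"
    using Suc.prems by (simp_all add: all_at_append length_chain K_def)
  then show ?case
    using mdfa_chain_sum[OF _ assms(2)] Suc.IH by (simp add: K_def algebra_simps)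
qed simp

lemma wf_level:
  assumes "\<forall>p\<in>set ps. wf_pair n m p" "wf_operand n m z"
  shows "all_at (wf_instr n) m (level_code j z m ps)
    \<and> (\<forall>b\<in>set (level_bits j z m ps). wf_operand n (m + length (level_code j z m ps)) b)
    \<and> (\<forall>p\<in>set (level_pairs j m ps). wf_pair n (m + length (level_code j z m ps)) p)"
  using assms
proof (induction j arbitrary: m ps)
  case (Suc j)
  define K where "K = ceil_half (length ps)"
  define m' where "m' = m + 8 * K"
  define B where "B = level_code j z m' (pair_outputs m K)"
  have IH: "all_at (wf_instr n) m' B
    \<and> (\<forall>b\<in>set (level_bits j z m' (pair_outputs m K)). wf_operand n (m' + length B) b)
    \<and> (\<forall>p\<in>set (level_pairs j m' (pair_outputs m K)). wf_pair n (m' + length B) p)"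
    using Suc.prems unfolding m'_def B_def
    by (intro Suc.IH wf_pair_outputs) (simp add: wf_operand_mono)
  have "wf_operand n m' (chain_carry m z ps)"
    unfolding m'_def K_def using Suc.prems(2) by (rule wf_chain_carry)
  then have "wf_operand n (m' + length B) (chain_carry m z ps)"
    by (rule wf_operand_mono) simp
  then show ?case
    using IH wf_chain[where A = mdfa, OF wf_mdfa length_mdfa Suc.prems Suc.prems(2)]
    by (simp add: all_at_append length_chain m'_def B_def K_def add.assoc)
qed simp

section \<open>Detecting at least one and at least two set bits\<close>

lemma two_le_card_iff: "finite A \<Longrightarrow> 2 \<le> card A \<longleftrightarrow> (\<exists>a\<in>A. \<exists>b\<in>A. a \<noteq> b)"
  using card_le_Suc0_iff_eq[of A] by auto

lemma grid_index_less: "(q::nat) < R \<Longrightarrow> c < W \<Longrightarrow> q * W + c < R * W"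
proof -
  assume "q < R" "c < W"
  then have "Suc q * W \<le> R * W" by (intro mult_le_mono1) simp
  with \<open>c < W\<close> show ?thesis by simp
qed

lemma grid_index_inject:
  "(c::nat) < W \<Longrightarrow> c' < W \<Longrightarrow> q * W + c = q' * W + c' \<longleftrightarrow> q = q' \<and> c = c'"
proof
  assume c: "c < W" "c' < W" and eq: "q * W + c = q' * W + c'"
  have "q = (q * W + c) div W" "q' = (q' * W + c') div W" using c by simp_all
  then show "q = q' \<and> c = c'" using eq by simp
qed simp

lemma length_filter_pos_iff: "0 < length (filter P xs) \<longleftrightarrow> (\<exists>i<length xs. P (xs ! i))"
  by (simp add: length_filter_conv_card card_gt_0_iff)

lemma two_le_length_filter_iff:
  "2 \<le> length (filter P xs) \<longleftrightarrow> (\<exists>i<length xs. \<exists>j<length xs. i \<noteq> j \<and> P (xs ! i) \<and> P (xs ! j))"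
  by (auto simp: length_filter_conv_card two_le_card_iff)

lemma two_le_length_filter_upt_iff:
  "2 \<le> length (filter P [0..<N]) \<longleftrightarrow> (\<exists>i<N. \<exists>j<N. i \<noteq> j \<and> P i \<and> P j)"
proof -
  have "{i. i < N \<and> P ([0..<N] ! i)} = {i. i < N \<and> P i}" by auto
  then show ?thesis by (simp add: length_filter_conv_card two_le_card_iff) blast
qed

lemma ex_grid_index_iff:
  fixes W R :: nat
  assumes "0 < W"
  shows "(\<exists>i<R * W. P i) \<longleftrightarrow> (\<exists>q<R. \<exists>c<W. P (q * W + c))"
proof
  assume "\<exists>i<R * W. P i"
  then obtain i where "i < R * W" "P i" by blast
  then show "\<exists>q<R. \<exists>c<W. P (q * W + c)"
    using assms by (intro exI[of _ "i div W"] conjI exI[of _ "i mod W"])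
      (simp_all add: less_mult_imp_div_less)
qed (use grid_index_less in blast)

lemma div_Suc_mult_bounds:
  fixes M W :: nat
  assumes "0 < W"
  shows "M \<le> Suc (M div W) * W" and "Suc (M div W) * W \<le> M + W"
proof -
  have "M div W * W + M mod W = M" "M mod W < W" "Suc (M div W) * W = M div W * W + W"
    using assms by simp_all
  then show "M \<le> Suc (M div W) * W" and "Suc (M div W) * W \<le> M + W"
    by linarith+
qed

lemma two_grid_cells_iff:
  fixes W R :: nat and P :: "nat \<Rightarrow> bool"
  assumes "0 < W"
  shows "(\<exists>i<R * W. \<exists>j<R * W. i \<noteq> j \<and> P i \<and> P j) \<longleftrightarrow>
    (\<exists>q<R. \<exists>q'<R. q \<noteq> q' \<and> (\<exists>c<W. P (q * W + c)) \<and> (\<exists>c<W. P (q' * W + c))) \<or>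
    (\<exists>c<W. \<exists>c'<W. c \<noteq> c' \<and> (\<exists>q<R. P (q * W + c)) \<and> (\<exists>q<R. P (q * W + c')))"
    (is "?cells \<longleftrightarrow> ?rows \<or> ?cols")
proof
  assume ?cells
  then obtain i j where ij: "i < R * W" "j < R * W" "i \<noteq> j" "P i" "P j" by blast
  have decomp: "k div W < R" "k mod W < W" "P k = P (k div W * W + k mod W)" if "k < R * W" for k
    using that assms by (simp_all add: less_mult_imp_div_less)
  show "?rows \<or> ?cols"
  proof (cases "i div W = j div W")
    case True
    then have "i mod W \<noteq> j mod W" using \<open>i \<noteq> j\<close> by (metis div_mult_mod_eq)
    then have ?cols using ij decomp[of i] decomp[of j] True by metis
    then show ?thesis ..
  next
    case False
    then have ?rows using ij decomp[of i] decomp[of j] by metis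
    then show ?thesis ..
  qed
next
  show "?rows \<or> ?cols \<Longrightarrow> ?cells"
    using grid_index_less grid_index_inject by metis
qed

fun count_to_two :: "nat \<Rightarrow> operand \<Rightarrow> operand \<Rightarrow> operand list \<Rightarrow> instr list" where
  "count_to_two m one two [] = []"
| "count_to_two m one two (e # es) =
     [(\<lambda>u v. u \<and> v, one, e), (\<lambda>u v. u \<or> v, two, Gate m), (\<lambda>u v. u \<or> v, one, e)]
     @ count_to_two (m + 3) (Gate (m + 2)) (Gate (m + 1)) es"

fun count_to_two_out :: "nat \<Rightarrow> operand \<Rightarrow> operand \<Rightarrow> operand list \<Rightarrow> operand \<times> operand" where
  "count_to_two_out m one two [] = (one, two)"
| "count_to_two_out m one two (e # es) = count_to_two_out (m + 3) (Gate (m + 2)) (Gate (m + 1)) es"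

lemma length_count_to_two [simp]: "length (count_to_two m one two es) = 3 * length es"
  by (induction es arbitrary: m one two) simp_all

lemma count_to_two_correct:
  assumes "all_at (evaluates xs G) m (count_to_two m one two es)"
    and "opval xs G one \<longleftrightarrow> 0 < c" and "opval xs G two \<longleftrightarrow> 2 \<le> c"
  shows "(opval xs G (fst (count_to_two_out m one two es))
        \<longleftrightarrow> 0 < c + length (filter (opval xs G) es))
    \<and> (opval xs G (snd (count_to_two_out m one two es)) \<longleftrightarrow> 2 \<le> c + length (filter (opval xs G) es))"
  using assms
proof (induction es arbitrary: m one two c)
  case (Cons e es)
  let ?c = "c + of_bool (opval xs G e)"
  have "all_at (evaluates xs G) (m + 3) (count_to_two (m + 3) (Gate (m + 2)) (Gate (m + 1)) es)"
    and "opval xs G (Gate (m + 2)) \<longleftrightarrow> 0 < ?c" and "opval xs G (Gate (m + 1)) \<longleftrightarrow> 2 \<le> ?c"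
    using Cons.prems by (auto simp: numeral_eq_Suc)
  from Cons.IH[OF this] show ?case by (simp add: add.assoc)
qed simp

lemma wf_count_to_two:
  assumes "\<forall>e\<in>set es. wf_operand n m e" "wf_operand n m one" "wf_operand n m two"
  shows "all_at (wf_instr n) m (count_to_two m one two es)
    \<and> wf_operand n (m + 3 * length es) (fst (count_to_two_out m one two es))
    \<and> wf_operand n (m + 3 * length es) (snd (count_to_two_out m one two es))"
  using assms
proof (induction es arbitrary: m one two)
  case (Cons e es)
  have "\<forall>e\<in>set es. wf_operand n (m + 3) e"
    using Cons.prems by (auto intro: wf_operand_mono)
  note IH = Cons.IH[OF this, of "Gate (m + 2)" "Gate (m + 1)"]
  show ?case
    using IH Cons.prems by (auto simp: numeral_eq_Suc add.assoc intro: wf_operand_mono)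
qed simp

text \<open>
  Bit \<open>q * W + c\<close> sits in row \<open>q\<close> and column \<open>c\<close> of a grid with \<open>W\<close> columns.  Gate
  \<open>grid_gate m W q c\<close> is the OR of row \<open>q\<close> up to column \<open>c\<close>, the next gate the OR of column
  \<open>c\<close> up to row \<open>q\<close>; the missing bits of the last row are the false operand \<open>z\<close>.
\<close>

definition cell :: "operand \<Rightarrow> operand list \<Rightarrow> nat \<Rightarrow> operand" where
  "cell z ys i = (if i < length ys then ys ! i else z)"

definition grid_gate :: "nat \<Rightarrow> nat \<Rightarrow> nat \<Rightarrow> nat \<Rightarrow> nat" where
  "grid_gate m W q c = m + 2 * (q * W + c)"

definition grid_cell_code :: "nat \<Rightarrow> operand \<Rightarrow> nat \<Rightarrow> operand list \<Rightarrow> nat \<Rightarrow> nat \<Rightarrow> instr list" where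
  "grid_cell_code m z W ys q c =
    [(\<lambda>u v. u \<or> v, if c = 0 then z else Gate (grid_gate m W q (c - 1)),
       cell z ys (q * W + c)),
     (\<lambda>u v. u \<or> v, if q = 0 then z else Gate (Suc (grid_gate m W (q - 1) c)),
       cell z ys (q * W + c))]"

definition or_grid :: "nat \<Rightarrow> operand \<Rightarrow> nat \<Rightarrow> nat \<Rightarrow> operand list \<Rightarrow> instr list" where
  "or_grid m z W R ys = concat (map (\<lambda>q. concat (map (grid_cell_code m z W ys q) [0..<W])) [0..<R])"

lemma length_or_grid [simp]: "length (or_grid m z W R ys) = 2 * R * W"
  by (simp add: or_grid_def grid_cell_code_def length_concat_uniform[where c = 2]
      length_concat_uniform[where c = "2 * W"])

lemma all_at_or_grid:
  "all_at Q m (or_grid m z W R ys)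
    \<longleftrightarrow> (\<forall>q<R. \<forall>c<W. all_at Q (grid_gate m W q c) (grid_cell_code m z W ys q c))"
  by (simp add: or_grid_def grid_cell_code_def grid_gate_def all_at_concat_uniform[where c = 2]
      all_at_concat_uniform[where c = "2 * W"] length_concat_uniform[where c = 2] algebra_simps)

lemma or_grid_gates:
  assumes "all_at (evaluates xs G) m (or_grid m z W R ys)" "\<not> opval xs G z" "q < R" "c < W"
  shows "G ! grid_gate m W q c
      \<longleftrightarrow> (0 < c \<and> G ! grid_gate m W q (c - 1)) \<or> opval xs G (cell z ys (q * W + c))"
    and "G ! Suc (grid_gate m W q c)
      \<longleftrightarrow> (0 < q \<and> G ! Suc (grid_gate m W (q - 1) c)) \<or> opval xs G (cell z ys (q * W + c))"
proof -
  have "all_at (evaluates xs G) (grid_gate m W q c) (grid_cell_code m z W ys q c)"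
    using assms(1,3,4) by (simp add: all_at_or_grid)
  then show "G ! grid_gate m W q c
      \<longleftrightarrow> (0 < c \<and> G ! grid_gate m W q (c - 1)) \<or> opval xs G (cell z ys (q * W + c))"
    and "G ! Suc (grid_gate m W q c)
      \<longleftrightarrow> (0 < q \<and> G ! Suc (grid_gate m W (q - 1) c)) \<or> opval xs G (cell z ys (q * W + c))"
    using assms(2) by (simp_all add: grid_cell_code_def)
qed

lemma or_grid_row:
  assumes "all_at (evaluates xs G) m (or_grid m z W R ys)" "\<not> opval xs G z" "q < R" "c < W"
  shows "G ! grid_gate m W q c \<longleftrightarrow> (\<exists>c'\<le>c. opval xs G (cell z ys (q * W + c')))"
  using assms(4)
proof (induction c)
  case 0
  then show ?case using or_grid_gates(1)[OF assms(1-3) 0] by simp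
next
  case (Suc c)
  then have "G ! grid_gate m W q (Suc c)
      \<longleftrightarrow> (\<exists>c'\<le>c. opval xs G (cell z ys (q * W + c'))) \<or> opval xs G (cell z ys (q * W + Suc c))"
    using or_grid_gates(1)[OF assms(1-3) Suc.prems] by simp
  then show ?case by (auto simp: le_Suc_eq)
qed

lemma or_grid_column:
  assumes "all_at (evaluates xs G) m (or_grid m z W R ys)" "\<not> opval xs G z" "q < R" "c < W"
  shows "G ! Suc (grid_gate m W q c) \<longleftrightarrow> (\<exists>q'\<le>q. opval xs G (cell z ys (q' * W + c)))"
  using assms(3)
proof (induction q)
  case 0
  then show ?case using or_grid_gates(2)[OF assms(1,2) 0 assms(4)] by simp
next
  case (Suc q)
  then have "G ! Suc (grid_gate m W (Suc q) c)
      \<longleftrightarrow> (\<exists>q'\<le>q. opval xs G (cell z ys (q' * W + c))) \<or> opval xs G (cell z ys (Suc q * W + c))"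
    using or_grid_gates(2)[OF assms(1,2) Suc.prems assms(4)] by simp
  then show ?case by (auto simp: le_Suc_eq)
qed

lemma wf_or_grid:
  assumes "\<forall>y\<in>set ys. wf_operand n m y" "wf_operand n m z" "0 < W"
  shows "all_at (wf_instr n) m (or_grid m z W R ys)"
proof -
  have "all_at (wf_instr n) (grid_gate m W q c) (grid_cell_code m z W ys q c)" for q c
  proof -
    have early: "wf_operand n (grid_gate m W q c) y" "wf_operand n (Suc (grid_gate m W q c)) y"
      if "wf_operand n m y" for y
      using that by (simp_all add: wf_operand_mono grid_gate_def)
    have "wf_operand n m (cell z ys (q * W + c))"
      using assms by (simp add: cell_def)
    moreover have "grid_gate m W q (c - 1) < grid_gate m W q c" if "0 < c"
      using that by (simp add: grid_gate_def)
    moreover have "grid_gate m W (q - 1) c < grid_gate m W q c" if "0 < q"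
      using that assms(3) by (simp add: grid_gate_def)
    ultimately show ?thesis
      using early[OF assms(2)] early[OF \<open>wf_operand n m (cell z ys (q * W + c))\<close>]
      by (cases "c = 0"; cases "q = 0") (simp_all add: grid_cell_code_def)
  qed
  then show ?thesis by (simp add: all_at_or_grid)
qed

definition row_outputs :: "nat \<Rightarrow> nat \<Rightarrow> nat \<Rightarrow> operand list" where
  "row_outputs m W R = map (\<lambda>q. Gate (grid_gate m W q (W - 1))) [0..<R]"

definition col_outputs :: "nat \<Rightarrow> nat \<Rightarrow> nat \<Rightarrow> operand list" where
  "col_outputs m W R = map (\<lambda>c. Gate (Suc (grid_gate m W (R - 1) c))) [0..<W]"

lemma length_row_outputs [simp]: "length (row_outputs m W R) = R"
  by (simp add: row_outputs_def)

lemma length_col_outputs [simp]: "length (col_outputs m W R) = W"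
  by (simp add: col_outputs_def)

definition detector :: "nat \<Rightarrow> operand \<Rightarrow> nat \<Rightarrow> nat \<Rightarrow> operand list \<Rightarrow> instr list" where
  "detector m z W R ys =
     or_grid m z W R ys
     @ count_to_two (m + 2 * R * W) z z (row_outputs m W R)
     @ count_to_two (m + 2 * R * W + 3 * R) z z (col_outputs m W R)
     @ [(\<lambda>u v. u \<or> v, snd (count_to_two_out (m + 2 * R * W) z z (row_outputs m W R)),
                       snd (count_to_two_out (m + 2 * R * W + 3 * R) z z (col_outputs m W R)))]"

definition detector_one :: "nat \<Rightarrow> operand \<Rightarrow> nat \<Rightarrow> nat \<Rightarrow> operand" where
  "detector_one m z W R = fst (count_to_two_out (m + 2 * R * W) z z (row_outputs m W R))"

definition detector_two :: "nat \<Rightarrow> nat \<Rightarrow> nat \<Rightarrow> operand" where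
  "detector_two m W R = Gate (m + 2 * R * W + 3 * R + 3 * W)"

lemma length_detector: "length (detector m z W R ys) = 2 * R * W + 3 * R + 3 * W + 1"
  by (simp add: detector_def)

lemma or_grid_row_count:
  assumes "all_at (evaluates xs G) m (or_grid m z W R ys)" "\<not> opval xs G z" "0 < W"
  shows "length (filter (opval xs G) (row_outputs m W R))
       = length (filter (\<lambda>q. \<exists>c<W. opval xs G (cell z ys (q * W + c))) [0..<R])"
proof -
  have "opval xs G (Gate (grid_gate m W q (W - 1))) \<longleftrightarrow> (\<exists>c<W. opval xs G (cell z ys (q * W + c)))"
    if "q < R" for q
    using or_grid_row[OF assms(1,2) that, of "W - 1"] assms(3)
    by (simp add: less_Suc_eq_le[symmetric])
  then show ?thesis
    unfolding row_outputs_def filter_map length_map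
    by (intro arg_cong[where f = length] filter_cong) auto
qed

lemma or_grid_col_count:
  assumes "all_at (evaluates xs G) m (or_grid m z W R ys)" "\<not> opval xs G z" "0 < R"
  shows "length (filter (opval xs G) (col_outputs m W R))
       = length (filter (\<lambda>c. \<exists>q<R. opval xs G (cell z ys (q * W + c))) [0..<W])"
proof -
  have "opval xs G (Gate (Suc (grid_gate m W (R - 1) c)))
      \<longleftrightarrow> (\<exists>q<R. opval xs G (cell z ys (q * W + c)))"
    if "c < W" for c
    using or_grid_column[OF assms(1,2) _ that, of "R - 1"] assms(3)
    by (simp add: less_Suc_eq_le[symmetric])
  then show ?thesis
    unfolding col_outputs_def filter_map length_map
    by (intro arg_cong[where f = length] filter_cong) auto
qed

lemma detector_correct:
  assumes "all_at (evaluates xs G) m (detector m z W R ys)" "\<not> opval xs G z"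
    and "0 < W" "0 < R" "length ys \<le> R * W"
  shows "(opval xs G (detector_one m z W R) \<longleftrightarrow> 0 < length (filter (opval xs G) ys))
       \<and> (opval xs G (detector_two m W R) \<longleftrightarrow> 2 \<le> length (filter (opval xs G) ys))"
proof -
  let ?v = "opval xs G" and ?rows = "row_outputs m W R" and ?cols = "col_outputs m W R"
  let ?P = "\<lambda>i. ?v (cell z ys i)"
  have grid: "all_at (evaluates xs G) m (or_grid m z W R ys)"
    and rows: "all_at (evaluates xs G) (m + 2 * R * W) (count_to_two (m + 2 * R * W) z z ?rows)"
    and cols: "all_at (evaluates xs G) (m + 2 * R * W + 3 * R)
                 (count_to_two (m + 2 * R * W + 3 * R) z z ?cols)"
    and two: "G ! (m + 2 * R * W + 3 * R + 3 * W)
      \<longleftrightarrow> ?v (snd (count_to_two_out (m + 2 * R * W) z z ?rows))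
        \<or> ?v (snd (count_to_two_out (m + 2 * R * W + 3 * R) z z ?cols))"
    using assms(1) by (simp_all add: detector_def all_at_append)
  have z: "?v z \<longleftrightarrow> 0 < (0::nat)" "?v z \<longleftrightarrow> 2 \<le> (0::nat)"
    using assms(2) by simp_all
  note row_count = count_to_two_correct[OF rows z, unfolded or_grid_row_count[OF grid assms(2,3)]]
  note col_count = count_to_two_correct[OF cols z, unfolded or_grid_col_count[OF grid assms(2,4)]]
  have "0 < length (filter ?v ys) \<longleftrightarrow> (\<exists>i<R * W. ?P i)"
    unfolding length_filter_pos_iff using assms(2,5) by (auto simp: cell_def)
  then have one: "?v (detector_one m z W R) \<longleftrightarrow> 0 < length (filter ?v ys)"
    using row_count ex_grid_index_iff[OF assms(3)]
    unfolding detector_one_def by (auto simp: filter_empty_conv)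
  have "2 \<le> length (filter ?v ys) \<longleftrightarrow> (\<exists>i<R * W. \<exists>j<R * W. i \<noteq> j \<and> ?P i \<and> ?P j)"
    using assms(2,5) by (auto simp: two_le_length_filter_iff cell_def)
  also have "\<dots> \<longleftrightarrow> 2 \<le> length (filter (\<lambda>q. \<exists>c<W. ?P (q * W + c)) [0..<R])
      \<or> 2 \<le> length (filter (\<lambda>c. \<exists>q<R. ?P (q * W + c)) [0..<W])"
    unfolding two_grid_cells_iff[OF assms(3)] two_le_length_filter_upt_iff ..
  finally show ?thesis
    using one two row_count col_count by (simp add: detector_two_def)
qed

lemma wf_detector:
  assumes "\<forall>y\<in>set ys. wf_operand n m y" "wf_operand n m z" "0 < W" "0 < R"
  shows "all_at (wf_instr n) m (detector m z W R ys)
    \<and> wf_operand n (m + length (detector m z W R ys)) (detector_one m z W R)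
    \<and> wf_operand n (m + length (detector m z W R ys)) (detector_two m W R)"
proof -
  define m1 where "m1 = m + 2 * R * W"
  define m2 where "m2 = m1 + 3 * R"
  have z1: "wf_operand n m1 z" and z2: "wf_operand n m2 z"
    using assms(2) by (simp_all add: wf_operand_mono m1_def m2_def)
  have "grid_gate m W q (W - 1) < m1" if "q < R" for q
    using grid_index_less[OF that, of "W - 1"] assms(3) by (simp add: grid_gate_def m1_def)
  then have "\<forall>e\<in>set (row_outputs m W R). wf_operand n m1 e"
    by (auto simp: row_outputs_def)
  note rows = wf_count_to_two[OF this z1 z1]
  have "Suc (grid_gate m W (R - 1) c) < m2" if "c < W" for c
    using grid_index_less[of "R - 1" R c W] that assms(4) by (simp add: grid_gate_def m1_def m2_def)
  then have "\<forall>e\<in>set (col_outputs m W R). wf_operand n m2 e"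
    by (auto simp: col_outputs_def)
  note cols = wf_count_to_two[OF this z2 z2]
  have detector: "detector m z W R ys = or_grid m z W R ys @ count_to_two m1 z z (row_outputs m W R)
      @ count_to_two m2 z z (col_outputs m W R)
      @ [(\<lambda>u v. u \<or> v, snd (count_to_two_out m1 z z (row_outputs m W R)),
                       snd (count_to_two_out m2 z z (col_outputs m W R)))]"
    by (simp add: detector_def m1_def m2_def)
  have offsets: "m + length (or_grid m z W R ys) = m1"
    "m1 + length (count_to_two m1 z z (row_outputs m W R)) = m2"
    "m2 + length (count_to_two m2 z z (col_outputs m W R)) = m2 + 3 * W"
    by (simp_all add: m1_def m2_def)
  have row_out: "wf_operand n (m2 + 3 * W) (snd (count_to_two_out m1 z z (row_outputs m W R)))"
    "wf_operand n (Suc (m2 + 3 * W)) (fst (count_to_two_out m1 z z (row_outputs m W R)))"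
    using rows by (auto simp: m2_def intro: wf_operand_mono[of n "m1 + 3 * R"])
  have "all_at (wf_instr n) m (detector m z W R ys)"
    unfolding detector all_at_append offsets
    using wf_or_grid[OF assms(1-3)] rows cols row_out by simp
  moreover have "m + length (detector m z W R ys) = Suc (m2 + 3 * W)"
    by (simp add: length_detector m1_def m2_def)
  moreover have "detector_one m z W R = fst (count_to_two_out m1 z z (row_outputs m W R))"
    and "detector_two m W R = Gate (m2 + 3 * W)"
    by (simp_all add: detector_one_def detector_two_def m1_def m2_def)
  ultimately show ?thesis using row_out by simp
qed

section \<open>Functions of a few operands\<close>

fun shannon_size :: "nat \<Rightarrow> nat" where
  "shannon_size 0 = 1"
| "shannon_size (Suc l) = 2 * shannon_size l + 3"

fun shannon :: "nat \<Rightarrow> operand \<Rightarrow> operand list \<Rightarrow> (bool list \<Rightarrow> bool) \<Rightarrow> instr list" where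
  "shannon m z [] F = [(\<lambda>_ _. F [], z, z)]"
| "shannon m z (q # qs) F =
     (let l = shannon_size (length qs); m' = m + l + l in
      shannon m z qs (\<lambda>bs. F (True # bs)) @ shannon (m + l) z qs (\<lambda>bs. F (False # bs))
      @ [(\<lambda>a b. a \<and> b, q, Gate (m + l - 1)), (\<lambda>a b. \<not> a \<and> b, q, Gate (m' - 1)),
         (\<lambda>a b. a \<or> b, Gate m', Gate (Suc m'))])"

lemma shannon_size_pos: "0 < shannon_size l"
  by (cases l) simp_all

lemma length_shannon [simp]: "length (shannon m z qs F) = shannon_size (length qs)"
  by (induction qs arbitrary: m F) (simp_all add: Let_def)

lemma shannon_correct:
  assumes "all_at (evaluates xs G) m (shannon m z qs F)"
  shows "G ! (m + shannon_size (length qs) - 1) = F (map (opval xs G) qs)"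
  using assms
proof (induction qs arbitrary: m F)
  case (Cons q qs)
  define l where "l = shannon_size (length qs)"
  define m' where "m' = m + l + l"
  have l: "0 < l" by (simp add: l_def shannon_size_pos)
  have "all_at (evaluates xs G) m (shannon m z qs (\<lambda>bs. F (True # bs)))"
    and "all_at (evaluates xs G) (m + l) (shannon (m + l) z qs (\<lambda>bs. F (False # bs)))"
    and "G ! m' \<longleftrightarrow> opval xs G q \<and> G ! (m + l - 1)"
    and "G ! Suc m' \<longleftrightarrow> \<not> opval xs G q \<and> G ! (m' - 1)"
    and "G ! Suc (Suc m') \<longleftrightarrow> G ! m' \<or> G ! Suc m'"
    using Cons.prems by (simp_all add: Let_def all_at_append l_def[symmetric] m'_def)
  with Cons.IH have "G ! Suc (Suc m') = F (map (opval xs G) (q # qs))"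
    using l by (cases "opval xs G q") (simp_all add: l_def m'_def)
  moreover have "m + shannon_size (length (q # qs)) - 1 = Suc (Suc m')"
    by (simp add: l_def m'_def)
  ultimately show ?case by simp
qed simp

lemma wf_shannon:
  assumes "\<forall>q\<in>set qs. wf_operand n m q" "wf_operand n m z"
  shows "all_at (wf_instr n) m (shannon m z qs F)"
  using assms
proof (induction qs arbitrary: m F)
  case (Cons q qs)
  define l where "l = shannon_size (length qs)"
  have l: "0 < l" by (simp add: l_def shannon_size_pos)
  have "all_at (wf_instr n) (m + l) (shannon (m + l) z qs (\<lambda>bs. F (False # bs)))"
    using Cons.prems by (intro Cons.IH) (auto intro: wf_operand_mono[of n m])
  moreover have "wf_operand n (m + l + l) q" "wf_operand n (Suc (m + l + l)) q"
    using Cons.prems by (auto intro: wf_operand_mono[of n m])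
  ultimately show ?case
    using Cons l by (simp add: Let_def all_at_append l_def[symmetric], linarith)
qed simp

section \<open>The threshold program\<close>

text \<open>The input list consists of the low bits \<open>b_0, \<dots>, b_(L-1)\<close>, then \<open>0 < T\<close> and \<open>2 \<le> T\<close>.\<close>

definition threshold_decoder :: "nat \<Rightarrow> nat \<Rightarrow> bool list \<Rightarrow> bool" where
  "threshold_decoder k L bs \<longleftrightarrow>
     bs ! Suc L \<or> k \<le> horner_sum of_bool 2 (take L bs) + 2 ^ L * of_bool (bs ! L)"

lemma threshold_from_low_bits:
  fixes h T :: nat
  assumes "k \<le> 2 ^ Suc L"
  shows "(2 \<le> T \<or> k \<le> h + 2 ^ L * of_bool (0 < T)) \<longleftrightarrow> k \<le> h + 2 ^ L * T"
proof (cases "2 \<le> T")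
  case True
  then have "2 ^ Suc L \<le> 2 ^ L * T" by simp
  then show ?thesis using True assms by linarith
next
  case False
  then have "of_bool (0 < T) = T" by (cases T) auto
  then show ?thesis using False by simp
qed

definition false_gate :: operand where
  "false_gate = Gate 0"

definition xor_code :: "nat \<Rightarrow> instr list" where
  "xor_code n = map (\<lambda>i. (\<lambda>u v. u \<noteq> v, Inp (2 * i), Inp (2 * i + 1))) [0..<n div 2]"

definition input_pairs :: "nat \<Rightarrow> (operand \<times> operand) list" where
  "input_pairs n = map (\<lambda>i. (Inp (2 * i), Gate (Suc i))) [0..<n div 2]
     @ (if odd n then [(false_gate, Inp (n - 1))] else [])"

lemma length_input_pairs: "length (input_pairs n) = ceil_half n"
  by (simp add: input_pairs_def ceil_half_def)

lemma sum_lessThan_double: "(\<Sum>i<2 * h. f i) = (\<Sum>i<h. f (2 * i) + f (2 * i + 1))" for f :: "nat \<Rightarrow> nat"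
  by (induction h) auto

lemma input_pairs_sum:
  assumes "all_at (evaluates xs G) 0 ((\<lambda>_ _. False, Inp 0, Inp 0) # xor_code n)" "length xs = n"
  shows "sum_list (map (pair_value xs G) (input_pairs n)) = length (filter id xs)"
proof -
  define h where "h = n div 2"
  have xor: "G ! Suc i \<longleftrightarrow> xs ! (2 * i) \<noteq> xs ! (2 * i + 1)" if "i < h" for i
    using assms(1) that by (simp add: xor_code_def all_at_map_upt h_def)
  have "G ! 0 = False" using assms(1) by simp
  then have odd_part:
    "sum_list (map (pair_value xs G) (if odd n then [(false_gate, Inp (n - 1))] else []))
      = (if odd n then of_bool (xs ! (n - 1)) else 0)"
    by (simp add: pair_value_def false_gate_def)
  have "sum_list (map (pair_value xs G) (map (\<lambda>i. (Inp (2 * i), Gate (Suc i))) [0..<h]))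
      = (\<Sum>i<h. pair_value xs G (Inp (2 * i), Gate (Suc i)))"
    by (simp add: interv_sum_list_conv_sum_set_nat atLeast0LessThan)
  also have "\<dots> = (\<Sum>i<h. of_bool (xs ! (2 * i)) + of_bool (xs ! (2 * i + 1)))"
    by (rule sum.cong) (auto simp: pair_value_def xor)
  also have "\<dots> = (\<Sum>j<2 * h. of_bool (xs ! j))"
    by (rule sum_lessThan_double[symmetric])
  finally have "sum_list (map (pair_value xs G) (input_pairs n))
      = (\<Sum>j<2 * h. of_bool (xs ! j)) + (if odd n then of_bool (xs ! (n - 1)) else 0)"
    using odd_part by (simp add: input_pairs_def h_def)
  also have "\<dots> = (\<Sum>j<n. of_bool (xs ! j))"
  proof (cases "odd n")
    case True
    then have "n = Suc (2 * h)" unfolding h_def by (metis odd_two_times_div_two_succ Suc_eq_plus1)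
    then show ?thesis by simp
  next
    case False
    then have "n = 2 * h" unfolding h_def by simp
    then show ?thesis using False by simp
  qed
  also have "\<dots> = length (filter id xs)"
    using assms(2) by (simp add: length_filter_conv_card sum_of_bool_eq Int_def)
  finally show ?thesis .
qed

definition levels_start :: "nat \<Rightarrow> nat" where
  "levels_start n = Suc (n div 2)"

definition top_pairs :: "nat \<Rightarrow> nat \<Rightarrow> (operand \<times> operand) list" where
  "top_pairs n L = level_pairs (L - 1) (levels_start n) (input_pairs n)"

definition top_start :: "nat \<Rightarrow> nat \<Rightarrow> nat" where
  "top_start n L =
     levels_start n + length (level_code (L - 1) false_gate (levels_start n) (input_pairs n))"

definition low_bits :: "nat \<Rightarrow> nat \<Rightarrow> operand list" where
  "low_bits n L = level_bits (L - 1) false_gate (levels_start n) (input_pairs n)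
     @ [chain_carry (top_start n L) false_gate (top_pairs n L)]"

definition high_bits :: "nat \<Rightarrow> nat \<Rightarrow> operand list" where
  "high_bits n L = bit_outputs (top_start n L) (ceil_half (length (top_pairs n L)))"

definition detector_start :: "nat \<Rightarrow> nat \<Rightarrow> nat" where
  "detector_start n L = top_start n L + 8 * ceil_half (length (top_pairs n L))"

definition grid_height :: "nat \<Rightarrow> nat \<Rightarrow> nat \<Rightarrow> nat" where
  "grid_height n L W = length (high_bits n L) div W + 1"

definition decoder_start :: "nat \<Rightarrow> nat \<Rightarrow> nat \<Rightarrow> nat" where
  "decoder_start n L W = detector_start n L
     + length (detector (detector_start n L) false_gate W (grid_height n L W) (high_bits n L))"

definition decoder_inputs :: "nat \<Rightarrow> nat \<Rightarrow> nat \<Rightarrow> operand list" where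
  "decoder_inputs n L W = low_bits n L
     @ [detector_one (detector_start n L) false_gate W (grid_height n L W),
        detector_two (detector_start n L) W (grid_height n L W)]"

text \<open>
  Gate 0 is the constant \<open>False\<close>, referred to as \<open>false_gate\<close>; its operands are dummies, which
  is why \<open>1 \<le> n\<close> is needed.
\<close>

definition thr_program :: "nat \<Rightarrow> nat \<Rightarrow> nat \<Rightarrow> nat \<Rightarrow> instr list" where
  "thr_program n k L W =
     (\<lambda>_ _. False, Inp 0, Inp 0) # xor_code n
     @ level_code (L - 1) false_gate (levels_start n) (input_pairs n)
     @ chain mdfa_bits false_gate (top_start n L) false_gate (top_pairs n L)
     @ detector (detector_start n L) false_gate W (grid_height n L W) (high_bits n L)
     @ shannon (decoder_start n L W) false_gate (decoder_inputs n L W) (threshold_decoder k L)"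

lemma all_at_thr_program:
  "all_at Q 0 (thr_program n k L W) \<longleftrightarrow>
     all_at Q 0 ((\<lambda>_ _. False, Inp 0, Inp 0) # xor_code n)
     \<and> all_at Q (levels_start n) (level_code (L - 1) false_gate (levels_start n) (input_pairs n))
     \<and> all_at Q (top_start n L)
         (chain mdfa_bits false_gate (top_start n L) false_gate (top_pairs n L))
     \<and> all_at Q (detector_start n L)
         (detector (detector_start n L) false_gate W (grid_height n L W) (high_bits n L))
     \<and> all_at Q (decoder_start n L W)
         (shannon (decoder_start n L W) false_gate (decoder_inputs n L W) (threshold_decoder k L))"
proof -
  have "length ((\<lambda>_ _. False, Inp 0, Inp 0) # xor_code n) = levels_start n"
    by (simp add: xor_code_def levels_start_def)
  moreover have "top_start n L
      + length (chain mdfa_bits false_gate (top_start n L) false_gate (top_pairs n L))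
      = detector_start n L"
    by (simp add: detector_start_def length_chain)
  ultimately show ?thesis
    unfolding thr_program_def append_Cons[symmetric] all_at_append
    by (simp add: top_start_def decoder_start_def)
qed

lemma length_low_bits: "1 \<le> L \<Longrightarrow> length (low_bits n L) = L"
  by (simp add: low_bits_def)

lemma length_decoder_inputs: "1 \<le> L \<Longrightarrow> length (decoder_inputs n L W) = L + 2"
  by (simp add: decoder_inputs_def length_low_bits)

lemma length_thr_program:
  "length (thr_program n k L W)
    = decoder_start n L W + shannon_size (length (decoder_inputs n L W))"
  by (simp add: thr_program_def decoder_start_def detector_start_def top_start_def levels_start_def
      xor_code_def length_chain)

lemma wf_input_pairs: "\<forall>p\<in>set (input_pairs n). wf_pair n (levels_start n) p"
  by (auto simp: input_pairs_def wf_pair_def levels_start_def false_gate_def dest: odd_pos)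

lemma wf_thr_program:
  assumes "1 \<le> n" "1 \<le> W"
  shows "wf_prog n (thr_program n k L W)"
proof -
  have z: "wf_operand n m false_gate" if "0 < m" for m
    using that by (simp add: false_gate_def)
  have starts: "levels_start n \<le> top_start n L" "top_start n L \<le> detector_start n L"
    "detector_start n L \<le> decoder_start n L W"
    by (simp_all add: top_start_def detector_start_def decoder_start_def)
  have pos: "0 < levels_start n" by (simp add: levels_start_def)
  note level = wf_level[OF wf_input_pairs z[OF pos], of "L - 1"]
  have head: "all_at (wf_instr n) 0 ((\<lambda>_ _. False, Inp 0, Inp 0) # xor_code n)"
    using assms(1) by (auto simp: xor_code_def all_at_map_upt)
  have top: "all_at (wf_instr n) (top_start n L)
      (chain mdfa_bits false_gate (top_start n L) false_gate (top_pairs n L))"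
    using level pos starts
    by (intro wf_chain[where A = mdfa_bits, OF wf_mdfa_bits length_mdfa_bits])
      (simp_all add: top_pairs_def top_start_def z)
  note det = wf_detector[of "high_bits n L" n "detector_start n L" false_gate W "grid_height n L W"]
  have det_wf: "all_at (wf_instr n) (detector_start n L)
        (detector (detector_start n L) false_gate W (grid_height n L W) (high_bits n L))
      \<and> wf_operand n (decoder_start n L W)
          (detector_one (detector_start n L) false_gate W (grid_height n L W))
      \<and> wf_operand n (decoder_start n L W)
          (detector_two (detector_start n L) W (grid_height n L W))"
    using det assms(2) pos starts
    by (simp add: high_bits_def detector_start_def wf_bit_outputs z grid_height_def
        decoder_start_def)
  have carry:
    "wf_operand n (detector_start n L) (chain_carry (top_start n L) false_gate (top_pairs n L))"
    unfolding detector_start_def using pos starts by (intro wf_chain_carry z) simp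
  have "\<forall>q\<in>set (decoder_inputs n L W). wf_operand n (decoder_start n L W) q"
    using level carry det_wf starts
    by (auto simp: decoder_inputs_def low_bits_def top_start_def intro: wf_operand_mono)
  then have "all_at (wf_instr n) (decoder_start n L W)
      (shannon (decoder_start n L W) false_gate (decoder_inputs n L W) (threshold_decoder k L))"
    using pos starts by (intro wf_shannon z) linarith+
  then show ?thesis
    using head level top det_wf unfolding wf_prog_iff_all_at all_at_thr_program by blast
qed

lemma thr_program_count:
  assumes "all_at (evaluates xs G) 0 (thr_program n k L W)" "length xs = n" "1 \<le> L"
  shows "length (filter id xs) = horner_sum of_bool 2 (map (opval xs G) (low_bits n L))
      + 2 ^ L * length (filter (opval xs G) (high_bits n L))"
proof -
  note parts = assms(1)[unfolded all_at_thr_program]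
  have z: "\<not> opval xs G false_gate"
    using parts by (simp add: false_gate_def)
  obtain L' where L': "L = Suc L'" using assms(3) by (cases L) simp_all
  let ?c = "opval xs G (chain_carry (top_start n L) false_gate (top_pairs n L))"
  let ?lb = "map (opval xs G) (level_bits L' false_gate (levels_start n) (input_pairs n))"
  have "length (filter id xs) = sum_list (map (pair_value xs G) (input_pairs n))"
    using input_pairs_sum parts assms(2) by simp
  also have "\<dots> = horner_sum of_bool 2 ?lb
      + 2 ^ L' * sum_list (map (pair_value xs G) (top_pairs n L))"
    using level_sum parts z by (simp add: top_pairs_def L')
  also have "sum_list (map (pair_value xs G) (top_pairs n L))
      = of_bool ?c + 2 * length (filter (opval xs G) (high_bits n L))"
    using mdfa_bits_chain_sum parts z by (simp add: high_bits_def)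
  finally show ?thesis
    by (simp add: low_bits_def horner_sum_append L' algebra_simps id_def)
qed

lemma thr_program_correct:
  assumes "1 \<le> n" "1 \<le> L" "1 \<le> W" "k \<le> 2 ^ Suc L" "length xs = n"
  shows "run (thr_program n k L W) xs [] ! (length (thr_program n k L W) - 1) = THR n k xs"
proof -
  define G where "G = run (thr_program n k L W) xs []"
  define T where "T = length (filter (opval xs G) (high_bits n L))"
  have eval: "all_at (evaluates xs G) 0 (thr_program n k L W)"
    unfolding G_def by (rule run_evaluates[OF wf_thr_program[OF assms(1,3)]])
  note parts = eval[unfolded all_at_thr_program]
  have z: "\<not> opval xs G false_gate"
    using parts by (simp add: false_gate_def)
  have "length (high_bits n L) \<le> grid_height n L W * W"
    using div_Suc_mult_bounds(1) assms(3) by (simp add: grid_height_def)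
  then have det:
    "opval xs G (detector_one (detector_start n L) false_gate W (grid_height n L W)) \<longleftrightarrow> 0 < T"
    "opval xs G (detector_two (detector_start n L) W (grid_height n L W)) \<longleftrightarrow> 2 \<le> T"
    using detector_correct[OF _ z] parts assms(3) by (simp_all add: T_def grid_height_def)
  have "G ! (length (thr_program n k L W) - 1)
      = threshold_decoder k L (map (opval xs G) (decoder_inputs n L W))"
    unfolding length_thr_program using parts by (intro shannon_correct) blast
  also have "\<dots> \<longleftrightarrow> 2 \<le> T
      \<or> k \<le> horner_sum of_bool 2 (map (opval xs G) (low_bits n L)) + 2 ^ L * of_bool (0 < T)"
    using det assms(2)
    by (simp add: threshold_decoder_def decoder_inputs_def nth_append length_low_bits)
  also have "\<dots> \<longleftrightarrow> k \<le> horner_sum of_bool 2 (map (opval xs G) (low_bits n L)) + 2 ^ L * T"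
    by (rule threshold_from_low_bits[OF assms(4)])
  also have "\<dots> \<longleftrightarrow> THR n k xs"
    using thr_program_count[OF eval assms(5,2)] by (simp add: THR_def T_def)
  finally show ?thesis unfolding G_def .
qed

section \<open>Counting the gates\<close>

lemma slp_size_THR_le:
  assumes "1 \<le> n" "1 \<le> L" "1 \<le> W" "k \<le> 2 ^ Suc L"
  shows "slp_size n (THR n k) \<le> length (thr_program n k L W)"
proof -
  have "0 < length (thr_program n k L W)"
    by (simp add: length_thr_program shannon_size_pos add_pos_pos)
  then have "computes n (thr_program n k L W) (length (thr_program n k L W) - 1) (THR n k)"
    using wf_thr_program[OF assms(1,3)] thr_program_correct[OF assms] by (simp add: computes_def)
  then show ?thesis unfolding slp_size_def by (intro Least_le) blast
qed

lemma length_high_bits: "1 \<le> L \<Longrightarrow> length (high_bits n L) = 2 * (ceil_half ^^ L) (ceil_half n)"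
  by (cases L)
    (simp_all add: high_bits_def top_pairs_def length_level_pairs length_input_pairs funpow_swap1)

lemma length_thr_program_eq:
  assumes "1 \<le> L"
  shows "length (thr_program n k L W)
    = Suc (n div 2) + (\<Sum>i<L. 8 * (ceil_half ^^ Suc i) (ceil_half n))
    + length (detector (detector_start n L) false_gate W (grid_height n L W) (high_bits n L))
    + shannon_size (L + 2)"
proof -
  obtain L' where L': "L = Suc L'" using assms by (cases L) simp_all
  have "(\<Sum>i<L. 8 * (ceil_half ^^ Suc i) (ceil_half n))
      = (\<Sum>i<L'. 8 * (ceil_half ^^ Suc i) (ceil_half n))
        + 8 * ceil_half ((ceil_half ^^ L') (ceil_half n))"
    by (simp add: L' funpow_swap1)
  then show ?thesis
    using assms
    by (simp add: length_thr_program length_decoder_inputs decoder_start_def detector_start_def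
        top_start_def levels_start_def length_level_code top_pairs_def length_level_pairs
        length_input_pairs L')
qed

lemma ceil_half_funpow_le: "real ((ceil_half ^^ j) n) \<le> real n / 2 ^ j + 1"
proof (induction j)
  case (Suc j)
  have "real (ceil_half ((ceil_half ^^ j) n)) \<le> (real ((ceil_half ^^ j) n) + 1) / 2"
    using of_nat_div_le_of_nat[of "Suc ((ceil_half ^^ j) n)" 2] by (simp add: ceil_half_def)
  also have "\<dots> \<le> real n / 2 ^ Suc j + 1"
    using Suc.IH by (simp add: field_simps)
  finally show ?case by simp
qed simp

lemma geometric_sum_bound: "(\<Sum>i<L. 2 * x / 2 ^ i) = 4 * x - 4 * x / 2 ^ L" for x :: real
  by (induction L) (simp_all add: field_simps)

lemma chain_cost_bound:
  "real (\<Sum>i<L. 8 * (ceil_half ^^ Suc i) (ceil_half n)) \<le> 4 * real n - 4 * real n / 2 ^ L + 8 * L"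
proof -
  have "real (\<Sum>i<L. 8 * (ceil_half ^^ Suc i) (ceil_half n))
      = (\<Sum>i<L. 8 * real ((ceil_half ^^ Suc (Suc i)) n))"
    by (simp add: funpow_Suc_right del: funpow.simps)
  also have "\<dots> \<le> (\<Sum>i<L. 2 * real n / 2 ^ i + 8)"
  proof (rule sum_mono)
    fix i
    show "8 * real ((ceil_half ^^ Suc (Suc i)) n) \<le> 2 * real n / 2 ^ i + 8"
      using ceil_half_funpow_le[of "Suc (Suc i)" n] by (simp add: field_simps)
  qed
  also have "\<dots> = 4 * real n - 4 * real n / 2 ^ L + 8 * L"
    by (simp add: sum.distrib geometric_sum_bound)
  finally show ?thesis .
qed

lemma detector_length_bound:
  assumes "0 < W"
  shows "real (length (detector m z W (M div W + 1) ys))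
    \<le> 2 * real M + 5 * real W + 3 * real M / real W + 4"
proof -
  have "real (Suc (M div W) * W) \<le> M + W"
    using div_Suc_mult_bounds(2)[OF assms, of M] by linarith
  moreover have "real (M div W) \<le> M / W"
    by (rule of_nat_div_le_of_nat)
  ultimately show ?thesis by (simp add: length_detector)
qed

lemma sqrt_grid_bound:
  assumes "1 \<le> n" "M \<le> real n + 2"
  defines "W \<equiv> nat \<lfloor>sqrt (real n)\<rfloor> + 1"
  shows "5 * real W + 3 * M / real W \<le> 8 * sqrt (real n) + 11"
proof -
  have s: "1 \<le> sqrt (real n)" using assms(1) by simp
  have W: "sqrt (real n) < W" "W \<le> sqrt (real n) + 1"
    unfolding W_def using floor_correct[of "sqrt (real n)"] s by linarith+
  have "M / W \<le> (real n + 2) / sqrt (real n)"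
    using assms(2) W s by (intro frac_le) auto
  also have "\<dots> = sqrt (real n) + 2 / sqrt (real n)"
    using s by (simp add: field_simps flip: of_nat_add)
  also have "2 / sqrt (real n) \<le> 2"
    using s by (simp add: divide_le_eq)
  finally show ?thesis using W by linarith
qed

lemma thr_program_size:
  assumes "1 \<le> n" "1 \<le> L"
  defines "W \<equiv> nat \<lfloor>sqrt (real n)\<rfloor> + 1"
  shows "real (length (thr_program n k L W))
    \<le> (4.5 - 2 / 2 ^ L) * real n + 8 * sqrt (real n) + (8 * L + 20 + shannon_size (L + 2))"
proof -
  define M where "M = length (high_bits n L)"
  have M: "real M \<le> real n / 2 ^ L + 2"
    using ceil_half_funpow_le[of "Suc L" n] assms(2)
    by (simp add: M_def length_high_bits funpow_Suc_right del: funpow.simps)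
  moreover have "real n / 2 ^ L \<le> real n"
    using mult_left_mono[of 1 "2 ^ L" "real n"] by (simp add: divide_le_eq)
  ultimately have "5 * real W + 3 * real M / real W \<le> 8 * sqrt (real n) + 11"
    using sqrt_grid_bound[OF assms(1)] unfolding W_def by simp
  moreover have "real (length
      (detector (detector_start n L) false_gate W (grid_height n L W) (high_bits n L)))
      \<le> 2 * real M + 5 * real W + 3 * real M / real W + 4"
    using detector_length_bound[of W] by (simp add: grid_height_def M_def W_def)
  moreover have "real (length (thr_program n k L W)) = 1 + real (n div 2)
      + real (\<Sum>i<L. 8 * (ceil_half ^^ Suc i) (ceil_half n))
      + real (length
          (detector (detector_start n L) false_gate W (grid_height n L W) (high_bits n L)))
      + real (shannon_size (L + 2))"
    by (simp add: length_thr_program_eq[OF assms(2)])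
  moreover have "(4.5 - 2 / 2 ^ L) * real n = 4.5 * real n - 2 * (real n / 2 ^ L)"
    by (simp add: algebra_simps)
  moreover have "real (n div 2) \<le> real n / 2"
    by linarith
  ultimately show ?thesis
    using chain_cost_bound[where L = L and n = n] M by linarith
qed

lemma ceiling_log2_bounds:
  assumes "4 \<le> k"
  defines "L \<equiv> nat \<lceil>log 2 (real k)\<rceil> - 1"
  shows "1 \<le> L" and "k \<le> 2 ^ Suc L"
    and "2 powr (2 - real_of_int \<lceil>log 2 (real k)\<rceil>) = 2 / 2 ^ L"
proof -
  have "2 \<le> log 2 (real k)"
    using assms(1) by (simp add: le_log_iff)
  then have t: "2 \<le> \<lceil>log 2 (real k)\<rceil>"
    by (simp add: le_ceiling_iff)
  then show "1 \<le> L" unfolding L_def by linarith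
  have tL: "real_of_int \<lceil>log 2 (real k)\<rceil> = real (Suc L)"
    using t by (simp add: L_def)
  have "real k = 2 powr log 2 (real k)"
    using assms(1) by simp
  also have "\<dots> \<le> 2 powr real_of_int \<lceil>log 2 (real k)\<rceil>"
    by (intro powr_mono) simp_all
  also have "\<dots> = real (2 ^ Suc L)"
    unfolding tL by (subst powr_realpow) simp_all
  finally show "k \<le> 2 ^ Suc L"
    by (simp only: of_nat_le_iff)
  show "2 powr (2 - real_of_int \<lceil>log 2 (real k)\<rceil>) = 2 / 2 ^ L"
    unfolding tL by (simp add: powr_diff powr_realpow)
qed

theorem theorem2:
  fixes k :: nat
  assumes "k \<ge> 4"
  shows "\<exists>g :: nat \<Rightarrow> real. g \<in> o(\<lambda>n. real n) \<and>
    (\<forall>\<^sub>F n in at_top. real (slp_size n (THR n k))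
        \<le> (4.5 - 2 powr (2 - real_of_int \<lceil>log 2 (real k)\<rceil>)) * real n + g n)"
proof -
  define L where "L = nat \<lceil>log 2 (real k)\<rceil> - 1"
  note L = ceiling_log2_bounds[OF assms, folded L_def]
  define g where "g n = 8 * sqrt (real n) + (8 * L + 20 + shannon_size (L + 2))" for n :: nat
  have "g \<in> o(\<lambda>n. real n)"
    unfolding g_def by real_asymp
  moreover have "real (slp_size n (THR n k)) \<le> (4.5 - 2 / 2 ^ L) * real n + g n" if "1 \<le> n" for n
    using slp_size_THR_le[OF that L(1) _ L(2), of "nat \<lfloor>sqrt (real n)\<rfloor> + 1"]
      thr_program_size[OF that L(1), of k]
    unfolding g_def by linarith
  ultimately show ?thesis
    unfolding L(3) by (intro exI[of _ g] conjI eventually_mono[OF eventually_ge_at_top[of 1]]) auto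
qed

end
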